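(* Let $\mu=(\mu_1\geq\mu_2\geq\dots\geq\mu_k>\mu_{k+1}=0)$ be a partition, let $\bar{\mu}=(\bar\mu_1\ge\bar\mu_2\ge\cdots)$ be its conjugate partition, and let $y$ be an indeterminate. Then for every integer $\ell$ with $1\le \ell\le \mu_1$, $$ \frac{1}{\mu_1+y}\prod_{1\le i\le\bar{\mu}_{\ell}}\frac{\mu_i-i+1+y}{\mu_i-i+y}=\frac{1}{\ell-\bar{\mu}_{\ell}-1+y}\prod_{\ell\le j\le \mu_1}\frac{j-\bar{\mu}_j-1+y}{j-\bar{\mu}_j+y}$$ as rational functions in $y$.
   Context: For a partition $\mu$, the conjugate partition $\bar\mu$ is defined by: $\bar{\mu}_j$ is the number of indices $i$ with $\mu_i\ge j$ (the number of nodes in column $j$ of the Young diagram of $\mu$). *)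

theory Defs
  imports "HOL-Computational_Algebra.Polynomial" "HOL-Computational_Algebra.Fraction_Field"
begin

text \<open>A partition is a function mu :: nat => nat, indexed from 1, weakly decreasing on the
positive integers and eventually zero. Its conjugate: the number of indices i >= 1 with
mu i >= j.\<close>

definition conj_part :: "(nat \<Rightarrow> nat) \<Rightarrow> nat \<Rightarrow> nat" where
  "conj_part mu j = card {i. 1 \<le> i \<and> j \<le> mu i}"

definition yvar :: "rat poly fract" where
  "yvar = Fract [:0, 1:] 1"

end

theory Submission
  imports Defs
begin

text \<open>Write \<open>w t = t + y\<close> and \<open>c = conj_part mu\<close>. Going from \<open>l + 1\<close> down to \<open>l\<close>,
the right side changes by the factor \<open>w (l - c l - 1) / w (l - c l)\<close> together with the new
prefactor, while the left side acquires the rows of length exactly \<open>l\<close>, namely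
\<open>c (l + 1) < i \<le> c l\<close>, whose factors telescope to \<open>w (l - c (l + 1)) / w (l - c l)\<close>.
The two changes agree, so the identity follows by downward induction from \<open>l = mu 1 + 1\<close>,
where both products are empty.\<close>

lemma down_closed_eq_atLeastAtMost_card:
  fixes S :: "nat set"
  assumes "finite S" and pos: "\<forall>i\<in>S. 1 \<le> i"
    and down: "\<forall>i\<in>S. \<forall>j. 1 \<le> j \<longrightarrow> j \<le> i \<longrightarrow> j \<in> S"
  shows "S = {1..card S}"
proof (cases "S = {}")
  case False
  then have "Max S \<in> S" using \<open>finite S\<close> by simp
  then have "{1..Max S} \<subseteq> S" using down by auto
  moreover have "S \<subseteq> {1..Max S}" using \<open>finite S\<close> pos by auto
  ultimately show ?thesis by (metis antisym card_atLeastAtMost diff_Suc_1)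
qed simp

lemma conj_part_le_iff:
  fixes mu :: "nat \<Rightarrow> nat"
  assumes mono: "\<forall>i j. 1 \<le> i \<longrightarrow> i \<le> j \<longrightarrow> mu j \<le> mu i"
    and zero: "\<forall>i>k. mu i = 0" and "1 \<le> l" and "1 \<le> i"
  shows "i \<le> conj_part mu l \<longleftrightarrow> l \<le> mu i"
proof -
  let ?S = "{i. 1 \<le> i \<and> l \<le> mu i}"
  have "?S \<subseteq> {1..k}" using zero \<open>1 \<le> l\<close> by (auto simp: not_le[symmetric])
  then have "finite ?S" by (rule finite_subset) simp
  moreover have "\<forall>i\<in>?S. \<forall>j. 1 \<le> j \<longrightarrow> j \<le> i \<longrightarrow> j \<in> ?S"
    using mono by (auto intro: le_trans)
  ultimately have "?S = {1..conj_part mu l}"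
    unfolding conj_part_def by (intro down_closed_eq_atLeastAtMost_card) auto
  then show ?thesis using \<open>1 \<le> i\<close> by (auto simp: set_eq_iff)
qed

lemma conj_part_Suc_le:
  fixes mu :: "nat \<Rightarrow> nat"
  assumes mono: "\<forall>i j. 1 \<le> i \<longrightarrow> i \<le> j \<longrightarrow> mu j \<le> mu i"
    and zero: "\<forall>i>k. mu i = 0" and "1 \<le> n"
  shows "conj_part mu (Suc n) \<le> conj_part mu n"
  using conj_part_le_iff[OF mono zero, of "Suc n" "conj_part mu (Suc n)"]
    conj_part_le_iff[OF mono zero \<open>1 \<le> n\<close>, of "conj_part mu (Suc n)"]
  by (cases "conj_part mu (Suc n) = 0") auto

lemma eq_if_conj_part_Suc_less:
  fixes mu :: "nat \<Rightarrow> nat"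
  assumes mono: "\<forall>i j. 1 \<le> i \<longrightarrow> i \<le> j \<longrightarrow> mu j \<le> mu i"
    and zero: "\<forall>i>k. mu i = 0" and "1 \<le> n"
    and "conj_part mu (Suc n) < i" and "i \<le> conj_part mu n"
  shows "mu i = n"
proof -
  have "1 \<le> i" using assms(4) by simp
  then show ?thesis
    using assms(4,5) conj_part_le_iff[OF mono zero \<open>1 \<le> n\<close> \<open>1 \<le> i\<close>]
      conj_part_le_iff[OF mono zero _ \<open>1 \<le> i\<close>, of "Suc n"] by simp
qed

lemma prod_shifted_ratio_telescope:
  fixes y :: "'a::field"
  assumes nz: "\<And>t. of_int t + y \<noteq> 0" and "a \<le> b"
  shows "(\<Prod>i\<in>{Suc a..b}. (of_int (n - int i + 1) + y) / (of_int (n - int i) + y))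
         = (of_int (n - int a) + y) / (of_int (n - int b) + y)"
proof -
  define f where "f i = inverse (of_int (n - int i) + y)" for i
  have "(\<Prod>i\<in>{Suc a..b}. (of_int (n - int i + 1) + y) / (of_int (n - int i) + y))
        = (\<Prod>i\<in>{Suc a..b}. f i / f (i - 1))"
    by (intro prod.cong) (auto simp: f_def of_nat_diff field_simps)
  also have "\<dots> = f b / f a"
  proof (rule prod_telescope'')
    show "f i \<noteq> 0" for i using nz[of "n - int i"] by (simp add: f_def)
  qed (rule \<open>a \<le> b\<close>)
  finally show ?thesis by (simp add: f_def divide_inverse mult.commute)
qed

lemma prod_rows_conj_part_split:
  fixes mu :: "nat \<Rightarrow> nat" and y :: "'a::field"
  assumes mono: "\<forall>i j. 1 \<le> i \<longrightarrow> i \<le> j \<longrightarrow> mu j \<le> mu i"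
    and zero: "\<forall>i>k. mu i = 0" and nz: "\<And>t. of_int t + y \<noteq> 0" and "1 \<le> n"
  defines "R \<equiv> \<lambda>l. \<Prod>i\<in>{1..conj_part mu l}.
             (of_int (int (mu i) - int i + 1) + y) / (of_int (int (mu i) - int i) + y)"
  shows "R n = R (Suc n) * ((of_int (int n - int (conj_part mu (Suc n))) + y)
                              / (of_int (int n - int (conj_part mu n)) + y))"
proof -
  let ?c = "conj_part mu"
  have le: "?c (Suc n) \<le> ?c n" using conj_part_Suc_le[OF mono zero \<open>1 \<le> n\<close>] .
  have "{1..?c n} = {1..?c (Suc n)} \<union> {Suc (?c (Suc n))..?c n}" using le by auto
  then have "R n = R (Suc n) * (\<Prod>i\<in>{Suc (?c (Suc n))..?c n}.
               (of_int (int (mu i) - int i + 1) + y) / (of_int (int (mu i) - int i) + y))"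
    unfolding R_def by (simp add: prod.union_disjoint ivl_disj_int_two(8))
  also have "(\<Prod>i\<in>{Suc (?c (Suc n))..?c n}.
               (of_int (int (mu i) - int i + 1) + y) / (of_int (int (mu i) - int i) + y))
           = (\<Prod>i\<in>{Suc (?c (Suc n))..?c n}.
               (of_int (int n - int i + 1) + y) / (of_int (int n - int i) + y))"
    using eq_if_conj_part_Suc_less[OF mono zero \<open>1 \<le> n\<close>] by (intro prod.cong) auto
  also have "\<dots> = (of_int (int n - int (?c (Suc n))) + y) / (of_int (int n - int (?c n)) + y)"
    using nz le by (rule prod_shifted_ratio_telescope)
  finally show ?thesis .
qed

lemma prod_rows_eq_prod_columns:
  fixes mu :: "nat \<Rightarrow> nat" and y :: "'a::field"
  assumes mono: "\<forall>i j. 1 \<le> i \<longrightarrow> i \<le> j \<longrightarrow> mu j \<le> mu i"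
    and zero: "\<forall>i>k. mu i = 0" and nz: "\<And>t. of_int t + y \<noteq> 0"
    and "1 \<le> l" and "l \<le> mu 1"
  shows "(1 / (of_int (int (mu 1)) + y)) *
           (\<Prod>i\<in>{1..conj_part mu l}.
              (of_int (int (mu i) - int i + 1) + y) / (of_int (int (mu i) - int i) + y))
         = (1 / (of_int (int l - int (conj_part mu l) - 1) + y)) *
           (\<Prod>j\<in>{l..mu 1}.
              (of_int (int j - int (conj_part mu j) - 1) + y) / (of_int (int j - int (conj_part mu j)) + y))"
proof -
  define m where "m = mu 1"
  define c where "c = conj_part mu"
  define w where "w t = of_int t + y" for t
  define R where "R n = (\<Prod>i\<in>{1..c n}. w (int (mu i) - int i + 1) / w (int (mu i) - int i))" for n
  define C where "C n = (\<Prod>j\<in>{n..m}. w (int j - int (c j) - 1) / w (int j - int (c j)))" for n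
  have w_nz: "w t \<noteq> 0" for t using nz by (simp add: w_def)
  have "l \<le> Suc m" using \<open>l \<le> mu 1\<close> by (simp add: m_def)
  then have "R l / w m = C l / w (int l - int (c l) - 1)"
  proof (induction rule: inc_induct)
    case base
    have "mu i \<le> m" if "1 \<le> i" for i using mono[rule_format, OF order_refl that] by (simp add: m_def)
    then have "{i. 1 \<le> i \<and> Suc m \<le> mu i} = {}" using Suc_n_not_le_n le_trans by blast
    then have "c (Suc m) = 0" unfolding c_def conj_part_def by (metis card.empty)
    then show ?case by (simp add: R_def C_def)
  next
    case (step n)
    have "1 \<le> n" using \<open>1 \<le> l\<close> \<open>l \<le> n\<close> by simp
    have "R n / w m = R (Suc n) / w m * (w (int n - int (c (Suc n))) / w (int n - int (c n)))"
      using prod_rows_conj_part_split[OF mono zero nz \<open>1 \<le> n\<close>] by (simp add: R_def c_def w_def)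
    also have "\<dots> = C (Suc n) / w (int n - int (c n))"
      using step.IH w_nz by simp
    also have "\<dots> = C n / w (int n - int (c n) - 1)"
      using \<open>n < Suc m\<close> w_nz by (simp add: C_def prod.atLeast_Suc_atMost)
    finally show ?case .
  qed
  then show ?thesis by (simp add: R_def C_def w_def c_def m_def)
qed

lemma of_int_fract: "(of_int t :: 'a::idom fract) = Fract (of_int t) 1"
  by (cases t rule: int_cases) (simp_all add: of_nat_fract One_fract_def)

lemma of_int_plus_yvar_nonzero: "of_int t + yvar \<noteq> 0"
  by (simp add: yvar_def of_int_fract eq_fract Zero_fract_def of_int_poly)

text \<open>The hypotheses on \<open>k\<close> are only used to make \<open>mu\<close> finitely supported.\<close>

theorem lemma2p7:
  fixes mu :: "nat \<Rightarrow> nat" and k :: nat and l :: nat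
  assumes mono: "\<forall>i j. 1 \<le> i \<longrightarrow> i \<le> j \<longrightarrow> mu j \<le> mu i"
    and muk: "1 \<le> k" and pos: "mu k > 0" and zero: "\<forall>i>k. mu i = 0"
    and l1: "1 \<le> l" and l2: "l \<le> mu 1"
  shows "(1 / (of_nat (mu 1) + yvar)) *
           (\<Prod>i\<in>{1..conj_part mu l}.
              (of_int (int (mu i) - int i + 1) + yvar) / (of_int (int (mu i) - int i) + yvar))
         = (1 / (of_int (int l - int (conj_part mu l) - 1) + yvar)) *
           (\<Prod>j\<in>{l..mu 1}.
              (of_int (int j - int (conj_part mu j) - 1) + yvar) / (of_int (int j - int (conj_part mu j)) + yvar))"
  using prod_rows_eq_prod_columns[OF mono zero of_int_plus_yvar_nonzero l1 l2] by simp

end
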